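(* Let $\{x_t\}_{t\ge0}$ be an aperiodic and $\varphi$-irreducible Markov chain on $\mathbb{X}$ with transition kernel $P$, and let $\{\mathcal{T}_n\}_{n\ge0}$ be a non-decreasing sequence of random times with $\mathcal{T}_0=0$ that is independent of $\{x_t\}$. Then any set $C$ that is small for $\{x_t\}$ is petite for the sampled process $\{x_{\mathcal{T}_n}\}$.
   Context: A set $C$ of positive maximal-irreducibility measure is $(m,\delta,\nu)$-small for $\{x_t\}$ if $P^m(x,B)\ge\delta\nu(B)$ for all $x\in C$ and Borel $B$, for some $m\ge1$, $\delta\in(0,1)$ and positive measure $\nu$. A set is petite for a process with one-step transition kernel $Q$ if $\sum_{n\ge0}a(n)Q^n(x,B)\ge\kappa(B)$ for all $x\in C$ and Borel $B$, for some probability distribution $a$ on $\mathbb{Z}_+$ and nonzero positive measure $\kappa$; for the sampled process the relevant kernel is $x\mapsto P^{\mathcal{T}_1}(x,\cdot)=\sum_k P(\mathcal{T}_1=k)P^k(x,\cdot)$. *)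

theory Defs
  imports "HOL-Probability.Probability"
begin

text \<open>Markov kernels are measure-valued maps P :: 'a => 'a measure, assumed to be
  measurable maps M ->M prob_algebra M. The n-step kernel P^n.\<close>

fun kpow :: "'a measure \<Rightarrow> ('a \<Rightarrow> 'a measure) \<Rightarrow> nat \<Rightarrow> 'a \<Rightarrow> 'a measure" where
  "kpow M K 0 x = return M x"
| "kpow M K (Suc n) x = K x \<bind> (\<lambda>y. kpow M K n y)"

definition irreducibility_measure :: "'a measure \<Rightarrow> ('a \<Rightarrow> 'a measure) \<Rightarrow> 'a measure \<Rightarrow> bool" where
  "irreducibility_measure M P \<phi> \<longleftrightarrow>
     sets \<phi> = sets M \<and> sigma_finite_measure \<phi> \<and> emeasure \<phi> (space M) > 0 \<and>
     (\<forall>B\<in>sets M. emeasure \<phi> B > 0 \<longrightarrow>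
        (\<forall>x\<in>space M. \<exists>n\<ge>1. emeasure (kpow M P n x) B > 0))"

definition phi_irreducible :: "'a measure \<Rightarrow> ('a \<Rightarrow> 'a measure) \<Rightarrow> 'a measure \<Rightarrow> bool" where
  "phi_irreducible M P \<phi> \<longleftrightarrow> irreducibility_measure M P \<phi>"

definition maximal_irreducibility_measure :: "'a measure \<Rightarrow> ('a \<Rightarrow> 'a measure) \<Rightarrow> 'a measure \<Rightarrow> bool" where
  "maximal_irreducibility_measure M P \<psi> \<longleftrightarrow>
     irreducibility_measure M P \<psi> \<and>
     (\<forall>\<phi>. irreducibility_measure M P \<phi> \<longrightarrow> absolutely_continuous \<psi> \<phi>)"

definition d_cycle :: "'a measure \<Rightarrow> ('a \<Rightarrow> 'a measure) \<Rightarrow> nat \<Rightarrow> (nat \<Rightarrow> 'a set) \<Rightarrow> bool" where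
  "d_cycle M P d D \<longleftrightarrow> d \<ge> 1 \<and>
     (\<forall>i<d. D i \<in> sets M) \<and>
     (\<forall>i<d. \<forall>j<d. i \<noteq> j \<longrightarrow> D i \<inter> D j = {}) \<and>
     (\<forall>i<d. \<forall>x\<in>D i. emeasure (P x) (D (Suc i mod d)) = 1) \<and>
     (\<exists>\<psi>. maximal_irreducibility_measure M P \<psi> \<and>
        emeasure \<psi> (space M - (\<Union>i<d. D i)) = 0)"

definition aperiodic :: "'a measure \<Rightarrow> ('a \<Rightarrow> 'a measure) \<Rightarrow> bool" where
  "aperiodic M P \<longleftrightarrow> (\<forall>d D. d_cycle M P d D \<longrightarrow> d = 1)"

definition small_set :: "'a measure \<Rightarrow> ('a \<Rightarrow> 'a measure) \<Rightarrow> 'a set \<Rightarrow> bool" where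
  "small_set M P C \<longleftrightarrow> C \<in> sets M \<and>
     (\<exists>\<psi>. maximal_irreducibility_measure M P \<psi> \<and> emeasure \<psi> C > 0) \<and>
     (\<exists>m::nat. \<exists>\<delta>::real. \<exists>\<nu>. m \<ge> 1 \<and> 0 < \<delta> \<and> \<delta> < 1 \<and>
        sets \<nu> = sets M \<and> emeasure \<nu> (space M) > 0 \<and>
        (\<forall>x\<in>C. \<forall>B\<in>sets M. emeasure (kpow M P m x) B \<ge> ennreal \<delta> * emeasure \<nu> B))"

definition petite_set :: "'a measure \<Rightarrow> ('a \<Rightarrow> 'a measure) \<Rightarrow> 'a set \<Rightarrow> bool" where
  "petite_set M Q C \<longleftrightarrow> C \<in> sets M \<and>
     (\<exists>a::nat pmf. \<exists>\<kappa>. sets \<kappa> = sets M \<and> emeasure \<kappa> (space M) > 0 \<and>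
        (\<forall>x\<in>C. \<forall>B\<in>sets M.
           (\<Sum>n. ennreal (pmf a n) * emeasure (kpow M Q n x) B) \<ge> emeasure \<kappa> B))"

text \<open>One-step kernel of the sampled process x_{T_n}: x |-> sum_k P(T_1 = k) P^k(x,.),
  where tau is the law of T_1.\<close>
definition sampled_kernel :: "'a measure \<Rightarrow> ('a \<Rightarrow> 'a measure) \<Rightarrow> nat pmf \<Rightarrow> 'a \<Rightarrow> 'a measure" where
  "sampled_kernel M P \<tau> x = measure_pmf \<tau> \<bind> (\<lambda>k. kpow M P k x)"

end

theory Submission
  imports Defs
begin

text \<open>Since \<tau> is not the point mass at 0, some k \<ge> 1 has \<tau>(k) > 0. One sampled step
  dominates \<tau>(k) times k steps of the chain, so m sampled steps dominate \<tau>(k)^m times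
  m k steps. Writing m k = m + r, the minorization P^m(x,\<cdot>) \<ge> \<delta> \<nu> on C propagates to
  P^(m+r)(x,\<cdot>) \<ge> \<delta> \<nu>P^r, and \<nu>P^r has the same positive total mass as \<nu>. Hence C is
  petite for the sampled chain, with sampling distribution the point mass at m.\<close>

lemma measurable_cong_sets_left:
  assumes "f \<in> M \<rightarrow>\<^sub>M N" "sets A = sets M"
  shows "f \<in> A \<rightarrow>\<^sub>M N"
  using assms measurable_cong_sets[of A M N N] by simp

lemma subprob_kernel_space:
  assumes "K \<in> M \<rightarrow>\<^sub>M subprob_algebra N" "x \<in> space M"
  shows "sets (K x) = sets N" "space (K x) = space N"
proof -
  show s: "sets (K x) = sets N"
    using measurable_space[OF assms] by (simp add: space_subprob_algebra)
  show "space (K x) = space N" by (rule sets_eq_imp_space_eq[OF s])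
qed

lemma nn_integral_mono_scaled_measure:
  assumes "sets \<mu> = sets \<nu>" "\<And>A. A \<in> sets \<nu> \<Longrightarrow> c * emeasure \<nu> A \<le> emeasure \<mu> A"
    and "f \<in> borel_measurable \<nu>"
  shows "c * (\<integral>\<^sup>+x. f x \<partial>\<nu>) \<le> (\<integral>\<^sup>+x. f x \<partial>\<mu>)"
proof -
  have "emeasure (scale_measure c \<nu>) A \<le> emeasure \<mu> A" for A
    using assms(1,2) by (cases "A \<in> sets \<nu>") (auto simp: emeasure_notin_sets)
  then have "scale_measure c \<nu> \<le> \<mu>"
    unfolding le_measure_iff using assms(1) sets_eq_imp_space_eq[OF assms(1)]
    by (simp add: le_fun_def space_scale_measure)
  then have "nn_integral (scale_measure c \<nu>) f \<le> nn_integral \<mu> f"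
    using assms(1) by (intro nn_integral_mono_measure) auto
  then show ?thesis using nn_integral_scale_measure[OF assms(3)] by simp
qed

lemma kpow_measurable:
  assumes "P \<in> M \<rightarrow>\<^sub>M subprob_algebra M"
  shows "kpow M P n \<in> M \<rightarrow>\<^sub>M subprob_algebra M"
proof (induction n)
  case 0
  have "kpow M P 0 = return M" by (rule ext) simp
  then show ?case by simp
next
  case (Suc n)
  have "kpow M P (Suc n) = (\<lambda>x. P x \<bind> kpow M P n)" by (rule ext) simp
  then show ?case using measurable_bind2[OF assms Suc] by simp
qed

lemma emeasure_bind_kernel:
  assumes "K \<in> M \<rightarrow>\<^sub>M subprob_algebra M" "sets \<mu> = sets M" "space M \<noteq> {}" "B \<in> sets M"
  shows "emeasure (\<mu> \<bind> K) B = (\<integral>\<^sup>+y. emeasure (K y) B \<partial>\<mu>)"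
  using emeasure_bind[OF _ measurable_cong_sets_left[OF assms(1,2)] assms(4)] assms(2,3)
    sets_eq_imp_space_eq[OF assms(2)] by simp

lemma kpow_add:
  assumes K: "P \<in> M \<rightarrow>\<^sub>M subprob_algebra M" and x: "x \<in> space M"
  shows "kpow M P (a + b) x = kpow M P a x \<bind> kpow M P b"
  using x
proof (induction a arbitrary: x)
  case 0
  then show ?case using bind_return[OF kpow_measurable[OF K]] by simp
next
  case (Suc a)
  have Px: "sets (P x) = sets M" "space (P x) = space M"
    using subprob_kernel_space[OF K Suc.prems] by auto
  have "kpow M P (Suc a + b) x = P x \<bind> (\<lambda>y. kpow M P a y \<bind> kpow M P b)"
    using Suc.IH Px(2) by (auto intro!: bind_cong_All)
  also have "\<dots> = (P x \<bind> kpow M P a) \<bind> kpow M P b"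
    using bind_assoc[OF measurable_cong_sets_left[OF kpow_measurable[OF K] Px(1)]
        kpow_measurable[OF K]] by simp
  finally show ?case by simp
qed

lemma emeasure_kpow_add:
  assumes K: "P \<in> M \<rightarrow>\<^sub>M subprob_algebra M" and "x \<in> space M" "B \<in> sets M"
  shows "emeasure (kpow M P (a + b) x) B = (\<integral>\<^sup>+y. emeasure (kpow M P b y) B \<partial>kpow M P a x)"
proof -
  have "sets (kpow M P a x) = sets M" "space M \<noteq> {}"
    using subprob_kernel_space[OF kpow_measurable[OF K] assms(2)] assms(2) by auto
  then show ?thesis
    using kpow_add[OF K assms(2)] emeasure_bind_kernel[OF kpow_measurable[OF K] _ _ assms(3)]
    by simp
qed

lemma emeasure_kpow_space:
  assumes K: "P \<in> M \<rightarrow>\<^sub>M prob_algebra M" and y: "y \<in> space M"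
  shows "emeasure (kpow M P n y) (space M) = 1"
  using y
proof (induction n arbitrary: y)
  case 0
  then show ?case by simp
next
  case (Suc n)
  have K': "P \<in> M \<rightarrow>\<^sub>M subprob_algebra M" using K by (rule measurable_prob_algebraD)
  have Py: "prob_space (P y)" "sets (P y) = sets M"
    using measurable_space[OF K Suc.prems] by (auto simp: space_prob_algebra)
  have "emeasure (kpow M P (Suc n) y) (space M) = (\<integral>\<^sup>+z. emeasure (kpow M P n z) (space M) \<partial>P y)"
    using emeasure_bind_kernel[OF kpow_measurable[OF K'] Py(2)] Suc.prems by auto
  also have "\<dots> = (\<integral>\<^sup>+z. 1 \<partial>P y)"
    using Suc.IH sets_eq_imp_space_eq[OF Py(2)] by (intro nn_integral_cong) simp
  also have "\<dots> = emeasure (P y) (space (P y))" by simp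
  finally show ?case using prob_space.emeasure_space_1[OF Py(1)] by simp
qed

lemma kpow_minorization_add:
  assumes K: "P \<in> M \<rightarrow>\<^sub>M subprob_algebra M" and "sets \<nu> = sets M" "x \<in> space M" "B \<in> sets M"
    and minor: "\<And>A. A \<in> sets M \<Longrightarrow> c * emeasure \<nu> A \<le> emeasure (kpow M P m x) A"
  shows "c * emeasure (\<nu> \<bind> kpow M P r) B \<le> emeasure (kpow M P (m + r) x) B"
proof -
  have Pm: "sets (kpow M P m x) = sets M"
    using subprob_kernel_space[OF kpow_measurable[OF K] assms(3)] by simp
  have f: "(\<lambda>y. emeasure (kpow M P r y) B) \<in> borel_measurable M"
    by (rule measurable_compose[OF kpow_measurable[OF K]
          measurable_emeasure_subprob_algebra[OF assms(4)]])
  have "c * emeasure (\<nu> \<bind> kpow M P r) B = c * (\<integral>\<^sup>+y. emeasure (kpow M P r y) B \<partial>\<nu>)"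
    using assms(2,3,4) by (subst emeasure_bind_kernel[OF kpow_measurable[OF K]]) auto
  also have "\<dots> \<le> (\<integral>\<^sup>+y. emeasure (kpow M P r y) B \<partial>kpow M P m x)"
    using Pm assms(2) minor
    by (intro nn_integral_mono_scaled_measure measurable_cong_sets_left[OF f]) auto
  also have "\<dots> = emeasure (kpow M P (m + r) x) B"
    using emeasure_kpow_add[OF K assms(3,4)] by simp
  finally show ?thesis .
qed

lemma emeasure_bind_kpow_space:
  assumes K: "P \<in> M \<rightarrow>\<^sub>M prob_algebra M" and "sets \<nu> = sets M" "space M \<noteq> {}"
  shows "emeasure (\<nu> \<bind> kpow M P r) (space M) = emeasure \<nu> (space M)"
proof -
  have "emeasure (\<nu> \<bind> kpow M P r) (space M) = (\<integral>\<^sup>+y. emeasure (kpow M P r y) (space M) \<partial>\<nu>)"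
    using emeasure_bind_kernel[OF kpow_measurable[OF measurable_prob_algebraD[OF K]] assms(2,3)]
    by simp
  also have "\<dots> = (\<integral>\<^sup>+y. 1 \<partial>\<nu>)"
    using emeasure_kpow_space[OF K] sets_eq_imp_space_eq[OF assms(2)] by (intro nn_integral_cong) simp
  finally have "emeasure (\<nu> \<bind> kpow M P r) (space M) = (\<integral>\<^sup>+y. 1 \<partial>\<nu>)" .
  then show ?thesis using sets_eq_imp_space_eq[OF assms(2)] by simp
qed

lemma sampled_kernel_measurable:
  assumes K: "P \<in> M \<rightarrow>\<^sub>M subprob_algebra M"
  shows "sampled_kernel M P \<tau> \<in> M \<rightarrow>\<^sub>M subprob_algebra M"
proof -
  have "(\<lambda>p. kpow M P (snd p) (fst p)) \<in> M \<Otimes>\<^sub>M count_space UNIV \<rightarrow>\<^sub>M subprob_algebra M"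
    by (rule measurable_compose_countable[where f="\<lambda>i p. kpow M P i (fst p)"])
       (auto intro: measurable_compose[OF measurable_fst kpow_measurable[OF K]])
  then have "(\<lambda>x. measure_pmf \<tau> \<bind> (\<lambda>k. kpow M P k x)) \<in> M \<rightarrow>\<^sub>M subprob_algebra M"
    by (intro measurable_bind'[where N="count_space UNIV"])
       (auto simp: measure_pmf_in_subprob_algebra)
  then show ?thesis unfolding sampled_kernel_def[abs_def] .
qed

lemma emeasure_sampled_kernel:
  assumes K: "P \<in> M \<rightarrow>\<^sub>M subprob_algebra M" and "B \<in> sets M" "x \<in> space M"
  shows "emeasure (sampled_kernel M P \<tau> x) B = (\<Sum>k. ennreal (pmf \<tau> k) * emeasure (kpow M P k x) B)"
proof -
  have "(\<lambda>k. kpow M P k x) \<in> measure_pmf \<tau> \<rightarrow>\<^sub>M subprob_algebra M"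
    using measurable_space[OF kpow_measurable[OF K] assms(3)] by simp
  then show ?thesis
    unfolding sampled_kernel_def
    by (simp add: emeasure_bind[OF _ _ assms(2)] nn_integral_measure_pmf
        nn_integral_count_space_nat)
qed

lemma emeasure_sampled_kernel_ge:
  assumes "P \<in> M \<rightarrow>\<^sub>M subprob_algebra M" and "B \<in> sets M" "x \<in> space M"
  shows "ennreal (pmf \<tau> k) * emeasure (kpow M P k x) B \<le> emeasure (sampled_kernel M P \<tau> x) B"
  unfolding emeasure_sampled_kernel[OF assms]
  using sum_le_suminf[of "\<lambda>k. ennreal (pmf \<tau> k) * emeasure (kpow M P k x) B" "{k}"]
  by auto

lemma kpow_sampled_kernel_ge:
  assumes K: "P \<in> M \<rightarrow>\<^sub>M subprob_algebra M" and x: "x \<in> space M" and B: "B \<in> sets M"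
  shows "ennreal (pmf \<tau> k) ^ n * emeasure (kpow M P (n * k) x) B
    \<le> emeasure (kpow M (sampled_kernel M P \<tau>) n x) B"
  using x
proof (induction n arbitrary: x)
  case 0
  then show ?case by simp
next
  case (Suc n)
  let ?Q = "sampled_kernel M P \<tau>" and ?c = "ennreal (pmf \<tau> k)"
  let ?f = "\<lambda>y. ?c ^ n * emeasure (kpow M P (n * k) y) B"
  have QK: "?Q \<in> M \<rightarrow>\<^sub>M subprob_algebra M" by (rule sampled_kernel_measurable[OF K])
  have Qx: "sets (?Q x) = sets M" "space (?Q x) = space M"
    using subprob_kernel_space[OF QK Suc.prems] by auto
  have Pkx: "sets (kpow M P k x) = sets M"
    using subprob_kernel_space[OF kpow_measurable[OF K] Suc.prems] by simp
  have "(\<lambda>y. emeasure (kpow M P (n * k) y) B) \<in> borel_measurable M"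
    by (rule measurable_compose[OF kpow_measurable[OF K] measurable_emeasure_subprob_algebra[OF B]])
  then have g: "(\<lambda>y. emeasure (kpow M P (n * k) y) B) \<in> borel_measurable (kpow M P k x)"
    by (rule measurable_cong_sets_left[OF _ Pkx])
  then have f: "?f \<in> borel_measurable (kpow M P k x)" by simp
  have "?c ^ Suc n * emeasure (kpow M P (k + n * k) x) B
      = ?c * (\<integral>\<^sup>+y. ?f y \<partial>kpow M P k x)"
    using g by (simp add: emeasure_kpow_add[OF K Suc.prems B] nn_integral_cmult mult.assoc)
  also have "\<dots> \<le> (\<integral>\<^sup>+y. ?f y \<partial>?Q x)"
    using Qx Pkx emeasure_sampled_kernel_ge[OF K _ Suc.prems]
    by (intro nn_integral_mono_scaled_measure[OF _ _ f]) auto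
  also have "\<dots> \<le> (\<integral>\<^sup>+y. emeasure (kpow M ?Q n y) B \<partial>?Q x)"
    using Suc.IH Qx by (intro nn_integral_mono) auto
  also have "\<dots> = emeasure (kpow M ?Q (Suc n) x) B"
    using emeasure_bind_kernel[OF kpow_measurable[OF QK] Qx(1) _ B] Suc.prems by fastforce
  finally show ?case by (simp add: add.commute)
qed

lemma petite_setI_kpow:
  assumes "C \<in> sets M" "sets \<kappa> = sets M" "emeasure \<kappa> (space M) > 0"
    and "\<And>x B. x \<in> C \<Longrightarrow> B \<in> sets M \<Longrightarrow> emeasure \<kappa> B \<le> emeasure (kpow M Q m x) B"
  shows "petite_set M Q C"
proof -
  have "emeasure \<kappa> B \<le> (\<Sum>n. ennreal (pmf (return_pmf m) n) * emeasure (kpow M Q n x) B)"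
    if "x \<in> C" "B \<in> sets M" for x B
    using assms(4)[OF that]
      sum_le_suminf[of "\<lambda>n. ennreal (pmf (return_pmf m) n) * emeasure (kpow M Q n x) B" "{m}"]
    by (auto intro: order.trans)
  then show ?thesis
    unfolding petite_set_def using assms(1-3) by blast
qed

lemma pmf_pos_nonzero:
  assumes "pmf \<tau> 0 < 1"
  obtains k :: nat where "k \<noteq> 0" "pmf \<tau> k > 0"
proof -
  have "\<tau> \<noteq> return_pmf 0" using assms by auto
  then have "\<not> set_pmf \<tau> \<subseteq> {0}" by (auto simp: set_pmf_subset_singleton)
  then show ?thesis using that by (auto simp: set_pmf_eq')
qed

theorem mainTheorem2:
  fixes M :: "'a measure" and P :: "'a \<Rightarrow> 'a measure"
    and \<phi> :: "'a measure" and \<tau> :: "nat pmf" and C :: "'a set"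
  assumes kernel: "P \<in> M \<rightarrow>\<^sub>M prob_algebra M"
    and irred: "phi_irreducible M P \<phi>"
    and aper: "aperiodic M P"
    and nondeg: "pmf \<tau> 0 < 1"
    and small: "small_set M P C"
  shows "petite_set M (sampled_kernel M P \<tau>) C"
proof -
  have K: "P \<in> M \<rightarrow>\<^sub>M subprob_algebra M" using kernel by (rule measurable_prob_algebraD)
  obtain k where k: "k \<noteq> 0" "pmf \<tau> k > 0" using pmf_pos_nonzero[OF nondeg] .
  from small obtain m :: nat and \<delta> :: real and \<nu> where
    C: "C \<in> sets M" and \<delta>: "0 < \<delta>" and \<nu>: "sets \<nu> = sets M" "emeasure \<nu> (space M) > 0"
    and minor: "\<And>x B. x \<in> C \<Longrightarrow> B \<in> sets M \<Longrightarrow> ennreal \<delta> * emeasure \<nu> B \<le> emeasure (kpow M P m x) B"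
    unfolding small_set_def by blast
  have CM: "C \<subseteq> space M" using C by (rule sets.sets_into_space)
  have nonempty: "space M \<noteq> {}" using \<nu>(2) by auto
  define r where "r = m * k - m"
  have mk: "m * k = m + r" using k(1) unfolding r_def by (cases k) auto
  define \<kappa> where "\<kappa> = scale_measure (ennreal (pmf \<tau> k ^ m) * ennreal \<delta>) (\<nu> \<bind> kpow M P r)"
  have "sets (\<nu> \<bind> kpow M P r) = sets M"
    using subprob_kernel_space(1)[OF kpow_measurable[OF K]] \<nu>(1) sets_eq_imp_space_eq[OF \<nu>(1)] nonempty
    by (intro sets_bind) auto
  moreover have "emeasure \<kappa> (space M) > 0"
    using k(2) \<delta> \<nu>(2) emeasure_bind_kpow_space[OF kernel \<nu>(1) nonempty]
    by (simp add: \<kappa>_def ennreal_zero_less_mult_iff)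
  moreover have "emeasure \<kappa> B \<le> emeasure (kpow M (sampled_kernel M P \<tau>) m x) B"
    if "x \<in> C" "B \<in> sets M" for x B
  proof -
    have "ennreal \<delta> * emeasure (\<nu> \<bind> kpow M P r) B \<le> emeasure (kpow M P (m * k) x) B"
      using kpow_minorization_add[OF K \<nu>(1) _ that(2) minor[OF that(1)]] that(1) CM mk by auto
    then have "emeasure \<kappa> B \<le> ennreal (pmf \<tau> k) ^ m * emeasure (kpow M P (m * k) x) B"
      by (simp add: \<kappa>_def ennreal_power mult.assoc mult_left_mono)
    also have "\<dots> \<le> emeasure (kpow M (sampled_kernel M P \<tau>) m x) B"
      using kpow_sampled_kernel_ge[OF K _ that(2)] that(1) CM by auto
    finally show ?thesis .
  qed
  ultimately show ?thesis by (intro petite_setI_kpow[OF C, of \<kappa>]) (auto simp: \<kappa>_def)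
qed

end
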